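(* Let $X$ be a topological space possessing an infinite metrizable gauge, let $\kappa$ be a regular cardinal with $\kappa\in\mathrm{MG}(X)$, let $G\in\mathcal{G}_\kappa$ and $d\in\mathrm{Met}(X;G)$. Let $\mathcal{F}$ be a Cauchy filter on $(X,d)$ and let $l\colon\kappa^\dagger\to G$ be a g-characteristic isotone embedding. Then there exists a map $\mathfrak{B}\colon\kappa\to\mathcal{F}$ such that: (1) each $\mathfrak{B}(\alpha)$ is a clopen subset of $X$; (2) for all $\alpha<\kappa$ and all $x,y\in\mathfrak{B}(\alpha)$ we have $d(x,y)\le l(\alpha)$; (3) if $\alpha\le\beta<\kappa$ then $\mathfrak{B}(\alpha)\supseteq\mathfrak{B}(\beta)$.
   Context: A linearly ordered Abelian group is an Abelian group with a linear order compatible with addition. For $x,y\in G_{>0}$, $x\asymp y$ iff $y\le nx$ and $x\le my$ for some $n,m\in\mathbb{Z}_{\ge1}$; $\mathrm{Arc}(G)=G_{>0}/\asymp$, ordered by $[x]\preceq[y]$ iff ($nx<y$ for all $n$) or $x\asymp y$; $\mathrm{Arc}(G)^\perp$ is $\mathrm{Arc}(G)$ with a new least element adjoined. For a bottomed linearly ordered set $S$ (least element $\perp_S$, $S^*=S\setminus\{\perp_S\}$), $\chi(S)$ is the least cardinal $\kappa>0$ such that some strictly decreasing family $(s_\alpha)_{\alpha<\kappa}$ in $S^*$ has every $t\in S^*$ bounded below by some $s_\alpha$. A $G$-metric: $d\colon X^2\to G$, $d(x,y)=0\iff x=y$, $d\ge0$, symmetric, triangle inequality; $\mathrm{Met}(X;G)$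 is the set of $G$-metrics generating the topology of $X$ via open balls of radii in $G_{>0}$. $\mathrm{MG}(X)$: cardinals $\kappa$ with some $G$, $\chi(\mathrm{Arc}(G)^\perp)=\kappa$, $\mathrm{Met}(X;G)\ne\emptyset$; infinite metrizable gauge: some $\kappa\in\mathrm{MG}(X)$ with $\kappa\ge\omega_0$. $\mathcal{G}_\kappa$: groups with $\chi(\mathrm{Arc}(G)^\perp)=\kappa$. $\kappa^\dagger$ is the set $\kappa+1=\{\alpha:\alpha\le\kappa\}$ of ordinals with reversed order (least element $\kappa$). A map $l\colon\kappa^\dagger\to G$ is an isotone embedding if it is injective and order preserving for the order of $\kappa^\dagger$ (so $\alpha\le\beta$ as ordinals implies $l(\beta)\le l(\alpha)$); it is g-characteristic if its image $Q$ satisfies $Q\subseteq G_{\ge0}$, $0\in Q$, and every $s\in G_{>0}$ has some $t\in Q\setminus\{0\}$ with $t\le s$. A filter $\mathcal{F}$ on $X$ is Cauchy if for every $\epsilon\in G_{>0}$ some $F\in\mathcal F$ has $d(x,y)<\epsilon$ for all $x,y\in F$. *)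

theory Defs
  imports "HOL-Analysis.Analysis"
begin

definition nsm :: "nat \<Rightarrow> 'g::linordered_ab_group_add \<Rightarrow> 'g" where
  "nsm n x = (\<Sum>i<n. x)"

definition arch_eq :: "'g::linordered_ab_group_add \<Rightarrow> 'g \<Rightarrow> bool" where
  "arch_eq x y \<longleftrightarrow> 0 < x \<and> 0 < y \<and> (\<exists>n\<ge>1. y \<le> nsm n x) \<and> (\<exists>m\<ge>1. x \<le> nsm m y)"

definition arc_class :: "'g::linordered_ab_group_add \<Rightarrow> 'g set" where
  "arc_class x = {y. arch_eq x y}"

definition Arc :: "'g::linordered_ab_group_add set set" where
  "Arc = arc_class ` {x. 0 < x}"

definition arc_le :: "'g::linordered_ab_group_add set \<Rightarrow> 'g set \<Rightarrow> bool" where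
  "arc_le A B \<longleftrightarrow> (\<exists>x\<in>A. \<exists>y\<in>B. (\<forall>n\<ge>1. nsm n x < y) \<or> arch_eq x y)"

text \<open>Arc(G)^perp: Arc(G) with a new least element None adjoined.\<close>
definition Arc_bot :: "'g::linordered_ab_group_add set option set" where
  "Arc_bot = insert None (Some ` Arc)"

fun arc_bot_le :: "'g::linordered_ab_group_add set option \<Rightarrow> 'g set option \<Rightarrow> bool" where
  "arc_bot_le None _ = True"
| "arc_bot_le (Some A) None = False"
| "arc_bot_le (Some A) (Some B) = arc_le A B"

definition dec_coinitial_family ::
  "'b set \<Rightarrow> ('b \<Rightarrow> 'b \<Rightarrow> bool) \<Rightarrow> 'b \<Rightarrow> 'k rel \<Rightarrow> ('k \<Rightarrow> 'b) \<Rightarrow> bool" where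
  "dec_coinitial_family S le b r s \<longleftrightarrow>
     (\<forall>\<alpha>\<in>Field r. s \<alpha> \<in> S - {b}) \<and>
     (\<forall>\<alpha>\<in>Field r. \<forall>\<beta>\<in>Field r. (\<alpha>, \<beta>) \<in> r \<and> \<alpha> \<noteq> \<beta> \<longrightarrow> le (s \<beta>) (s \<alpha>) \<and> s \<beta> \<noteq> s \<alpha>) \<and>
     (\<forall>t\<in>S - {b}. \<exists>\<alpha>\<in>Field r. le (s \<alpha>) t)"

text \<open>is_chi S le b r: the cardinal r equals chi(S), i.e. r is the least nonzero
  cardinal admitting such a family.\<close>
definition is_chi :: "'b set \<Rightarrow> ('b \<Rightarrow> 'b \<Rightarrow> bool) \<Rightarrow> 'b \<Rightarrow> 'k rel \<Rightarrow> bool" where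
  "is_chi S le b r \<longleftrightarrow>
     Card_order r \<and> Field r \<noteq> {} \<and> (\<exists>s. dec_coinitial_family S le b r s) \<and>
     (\<forall>\<mu>::'k rel. Card_order \<mu> \<and> Field \<mu> \<noteq> {} \<and> (\<mu>, r) \<in> ordLess \<longrightarrow>
        \<not> (\<exists>s. dec_coinitial_family S le b \<mu> s))"

text \<open>G in \<G>_\<kappa>: chi(Arc(G)^perp) = \<kappa>.  The group is the type 'g.\<close>
definition in_G_kappa :: "'g::linordered_ab_group_add itself \<Rightarrow> 'k rel \<Rightarrow> bool" where
  "in_G_kappa _ r \<longleftrightarrow> is_chi (Arc_bot :: 'g set option set) arc_bot_le None r"

definition Gmetric :: "'a set \<Rightarrow> ('a \<Rightarrow> 'a \<Rightarrow> 'g::linordered_ab_group_add) \<Rightarrow> bool" where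
  "Gmetric S d \<longleftrightarrow> (\<forall>x\<in>S. \<forall>y\<in>S. (d x y = 0 \<longleftrightarrow> x = y) \<and> 0 \<le> d x y \<and> d x y = d y x \<and>
                      (\<forall>z\<in>S. d x z \<le> d x y + d y z))"

definition gball :: "'a set \<Rightarrow> ('a \<Rightarrow> 'a \<Rightarrow> 'g::linordered_ab_group_add) \<Rightarrow> 'a \<Rightarrow> 'g \<Rightarrow> 'a set" where
  "gball S d x e = {y\<in>S. d x y < e}"

definition Met :: "'a topology \<Rightarrow> ('a \<Rightarrow> 'a \<Rightarrow> 'g::linordered_ab_group_add) \<Rightarrow> bool" where
  "Met X d \<longleftrightarrow> Gmetric (topspace X) d \<and>
     X = topology_generated_by {gball (topspace X) d x e | x e. x \<in> topspace X \<and> 0 < e}"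

definition cauchy_filter :: "'a topology \<Rightarrow> ('a \<Rightarrow> 'a \<Rightarrow> 'g::linordered_ab_group_add) \<Rightarrow> 'a filter \<Rightarrow> bool" where
  "cauchy_filter X d F \<longleftrightarrow> eventually (\<lambda>x. x \<in> topspace X) F \<and>
     (\<forall>e>0. \<exists>A. eventually (\<lambda>x. x \<in> A) F \<and> (\<forall>x\<in>A. \<forall>y\<in>A. d x y < e))"

text \<open>kappa-dagger = kappa+1 = Field r plus a top ordinal None (= kappa itself);
  ord_le is the ordinal order on kappa+1 (the dagger order is its reverse).\<close>
definition dagger :: "'k rel \<Rightarrow> 'k option set" where
  "dagger r = insert None (Some ` Field r)"

fun ord_le :: "'k rel \<Rightarrow> 'k option \<Rightarrow> 'k option \<Rightarrow> bool" where
  "ord_le r _ None = True"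
| "ord_le r None (Some b) = False"
| "ord_le r (Some a) (Some b) = ((a, b) \<in> r)"

definition isotone_embedding :: "'k rel \<Rightarrow> ('k option \<Rightarrow> 'g::linordered_ab_group_add) \<Rightarrow> bool" where
  "isotone_embedding r l \<longleftrightarrow> inj_on l (dagger r) \<and>
     (\<forall>a\<in>dagger r. \<forall>b\<in>dagger r. ord_le r a b \<longrightarrow> l b \<le> l a)"

definition g_characteristic :: "'k rel \<Rightarrow> ('k option \<Rightarrow> 'g::linordered_ab_group_add) \<Rightarrow> bool" where
  "g_characteristic r l \<longleftrightarrow> l ` dagger r \<subseteq> {x. 0 \<le> x} \<and> 0 \<in> l ` dagger r \<and>
     (\<forall>s>0. \<exists>t\<in>l ` dagger r - {0}. t \<le> s)"

end

theory Submission
  imports Defs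
begin

text \<open>
  Fix \<open>\<alpha>\<close> and put \<open>L = l(\<alpha>)\<close>. Call \<open>g\<close> infinitesimal with respect to \<open>L\<close> if \<open>n g < L\<close> for
  all \<open>n \<ge> 1\<close>. Such elements are closed under addition, so by the triangle inequality the
  relation "\<open>d(x, y)\<close> is infinitesimal" is an equivalence relation on \<open>X\<close>, whose classes have
  diameter below \<open>L\<close>. Every class contains a ball of positive radius: either some positive
  element of \<open>G\<close> is infinitesimal, or \<open>[L]\<close> is the least Archimedean class, which forces
  \<open>\<chi> = 1\<close> and then makes \<open>L\<close> the least positive element of \<open>G\<close>. So the classes are open,
  hence also closed. A proper Cauchy filter contains exactly one class for each \<open>\<alpha>\<close>, and
  these classes shrink as \<open>L\<close> decreases.
\<close>

lemma nsm_1 [simp]: "nsm 1 x = x"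
  by (simp add: nsm_def)

lemma nsm_zero [simp]: "nsm n 0 = 0"
  by (simp add: nsm_def)

lemma nsm_add_left: "nsm (m + n) x = nsm m x + nsm n x"
  unfolding nsm_def by (induction m) (simp_all add: add_ac)

lemma nsm_add_right: "nsm n (x + y) = nsm n x + nsm n y"
  unfolding nsm_def by (rule sum.distrib)

lemma nsm_mono: "(x::'g::linordered_ab_group_add) \<le> y \<Longrightarrow> nsm n x \<le> nsm n y"
  unfolding nsm_def by (rule sum_mono) simp

definition infinitesimal :: "'g::linordered_ab_group_add \<Rightarrow> 'g \<Rightarrow> bool" where
  "infinitesimal L g \<longleftrightarrow> (\<forall>n\<ge>1. nsm n g < L)"

lemma infinitesimal_less: "infinitesimal L g \<Longrightarrow> g < L"
  unfolding infinitesimal_def by (metis nsm_1 order_refl)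

lemma infinitesimal_zero: "0 < L \<Longrightarrow> infinitesimal L 0"
  by (simp add: infinitesimal_def)

lemma infinitesimal_le: "infinitesimal L g \<Longrightarrow> h \<le> g \<Longrightarrow> infinitesimal L h"
  unfolding infinitesimal_def using nsm_mono le_less_trans by blast

lemma infinitesimal_bound_mono: "infinitesimal L g \<Longrightarrow> L \<le> L' \<Longrightarrow> infinitesimal L' g"
  unfolding infinitesimal_def using less_le_trans by blast

lemma infinitesimal_add:
  assumes "infinitesimal L g" "infinitesimal L h"
  shows "infinitesimal L (g + h)"
  unfolding infinitesimal_def
proof (intro allI impI)
  fix n :: nat assume "1 \<le> n"
  have "nsm n (g + h) \<le> nsm n (max g h + max g h)"
    by (intro nsm_mono add_mono) simp_all
  also have "\<dots> = nsm (n + n) (max g h)"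
    by (simp add: nsm_add_left nsm_add_right)
  also have "\<dots> < L"
    using assms \<open>1 \<le> n\<close> unfolding infinitesimal_def by (simp add: max_def)
  finally show "nsm n (g + h) < L" .
qed

lemma arch_eq_refl: "0 < x \<Longrightarrow> arch_eq x x"
  unfolding arch_eq_def by (auto intro!: exI[of _ 1] simp: nsm_def)

lemma arc_le_if_not_infinitesimal:
  assumes "0 < L" "0 < g" "\<not> infinitesimal L g"
  shows "arc_le (arc_class L) (arc_class g)"
proof -
  have "(\<forall>n\<ge>1. nsm n L < g) \<or> arch_eq L g"
    using assms unfolding arch_eq_def infinitesimal_def by (meson not_le)
  then show ?thesis
    unfolding arc_le_def arc_class_def using arch_eq_refl assms(1,2) by blast
qed

lemma dec_coinitial_family_least_arc_class:
  fixes L :: "'g::linordered_ab_group_add"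
  assumes "0 < L" "\<forall>g>0. \<not> infinitesimal L g"
  shows "dec_coinitial_family (Arc_bot :: 'g set option set) arc_bot_le None
           (card_of {a}) (\<lambda>_. Some (arc_class L))"
  using assms arc_le_if_not_infinitesimal
  by (auto simp: dec_coinitial_family_def Field_card_of Arc_bot_def Arc_def)

lemma is_chi_singleton:
  assumes chi: "is_chi S le b r" and a: "a \<in> Field r"
    and s: "dec_coinitial_family S le b (card_of {a}) s"
  shows "Field r = {a}"
proof (rule ccontr)
  assume "Field r \<noteq> {a}"
  then obtain a' where a': "a' \<in> Field r" "a' \<noteq> a" using a by blast
  have "\<not> (\<exists>f. inj_on f (Field r) \<and> f ` Field r \<subseteq> {a})"
    using a a' by (metis inj_on_def image_subset_iff singletonD)
  then have "(card_of {a}, card_of (Field r)) \<in> ordLess"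
    using card_of_ordLess by blast
  moreover have "(card_of (Field r), r) \<in> ordIso"
    using chi by (simp add: is_chi_def card_of_Field_ordIso)
  ultimately have "(card_of {a}, r) \<in> ordLess"
    by (rule ordLess_ordIso_trans)
  moreover have "Card_order (card_of {a})" "Field (card_of {a}) \<noteq> {}"
    by (rule card_of_Card_order) (simp add: Field_card_of)
  ultimately show False
    using chi s unfolding is_chi_def by blast
qed

lemma isotone_embedding_antimono:
  "isotone_embedding r l \<Longrightarrow> (a, b) \<in> r \<Longrightarrow> l (Some b) \<le> l (Some a)"
  unfolding isotone_embedding_def dagger_def by (auto intro: FieldI1 FieldI2)

lemma g_characteristic_None:
  assumes "isotone_embedding r l" "g_characteristic r l"
  shows "l None = 0"
proof -
  obtain z where z: "z \<in> dagger r" "l z = 0"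
    using assms(2) unfolding g_characteristic_def by auto
  have "ord_le r z None" by (cases z) auto
  then have "l None \<le> 0"
    using assms(1) z unfolding isotone_embedding_def dagger_def by auto
  moreover have "0 \<le> l None"
    using assms(2) unfolding g_characteristic_def dagger_def by auto
  ultimately show ?thesis by simp
qed

lemma g_characteristic_pos:
  assumes "isotone_embedding r l" "g_characteristic r l" "a \<in> Field r"
  shows "0 < l (Some a)"
proof -
  have "l (Some a) \<noteq> l None"
    using assms(1,3) unfolding isotone_embedding_def inj_on_def dagger_def by blast
  moreover have "0 \<le> l (Some a)"
    using assms(2,3) unfolding g_characteristic_def dagger_def by auto
  ultimately show ?thesis
    using g_characteristic_None[OF assms(1,2)] by simp
qed

lemma in_G_kappa_infinitesimal_radius:
  fixes l :: "'k option \<Rightarrow> 'g::linordered_ab_group_add"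
  assumes G: "in_G_kappa TYPE('g) r"
    and l: "isotone_embedding r l" "g_characteristic r l" and a: "a \<in> Field r"
  obtains \<rho> where "0 < \<rho>" "\<And>g. 0 \<le> g \<Longrightarrow> g < \<rho> \<Longrightarrow> infinitesimal (l (Some a)) g"
proof (cases "\<exists>c>0. infinitesimal (l (Some a)) c")
  case True
  then obtain c where c: "0 < c" "infinitesimal (l (Some a)) c"
    by blast
  show ?thesis
    by (rule that[OF c(1)]) (use c(2) infinitesimal_le in \<open>blast intro: less_imp_le\<close>)
next
  case False
  define L where "L = l (Some a)"
  have L: "0 < L" using g_characteristic_pos[OF l a] by (simp add: L_def)
  have "\<forall>g>0. \<not> infinitesimal L g"
    using False by (simp add: L_def)
  then have "Field r = {a}"
    using G is_chi_singleton[OF _ a dec_coinitial_family_least_arc_class[OF L]]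
    by (simp add: in_G_kappa_def)
  then have dagger: "dagger r = {None, Some a}"
    by (simp add: dagger_def)
  have least: "L \<le> s" if "0 < s" for s
  proof -
    obtain t where "t \<in> l ` dagger r - {0}" "t \<le> s"
      using l(2) \<open>0 < s\<close> unfolding g_characteristic_def by blast
    then show ?thesis
      by (auto simp: dagger L_def g_characteristic_None[OF l])
  qed
  show ?thesis
  proof (rule that[OF L])
    fix g assume "0 \<le> g" "g < L"
    then have "g = 0" using least[of g] by force
    then show "infinitesimal (l (Some a)) g" using L by (simp add: L_def infinitesimal_zero)
  qed
qed

locale G_metric_space =
  fixes X :: "'a topology" and d :: "'a \<Rightarrow> 'a \<Rightarrow> 'g::linordered_ab_group_add"
  assumes Met: "Met X d"
begin

lemma Gmetric: "Gmetric (topspace X) d"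
  using Met by (simp add: Met_def)

lemma dist_self: "x \<in> topspace X \<Longrightarrow> d x x = 0"
  and dist_nonneg: "x \<in> topspace X \<Longrightarrow> y \<in> topspace X \<Longrightarrow> 0 \<le> d x y"
  and dist_commute: "x \<in> topspace X \<Longrightarrow> y \<in> topspace X \<Longrightarrow> d x y = d y x"
  and dist_triangle: "x \<in> topspace X \<Longrightarrow> y \<in> topspace X \<Longrightarrow> z \<in> topspace X \<Longrightarrow>
      d x z \<le> d x y + d y z"
  using Gmetric unfolding Gmetric_def by blast+

lemma openin_gball: "x \<in> topspace X \<Longrightarrow> 0 < e \<Longrightarrow> openin X (gball (topspace X) d x e)"
  using Met topology_generated_by_Basis unfolding Met_def by (metis (mono_tags, lifting) mem_Collect_eq)

lemma centre_in_gball: "x \<in> topspace X \<Longrightarrow> 0 < e \<Longrightarrow> x \<in> gball (topspace X) d x e"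
  by (simp add: gball_def dist_self)

lemma openin_if_gball_subset:
  assumes "\<And>x. x \<in> U \<Longrightarrow> \<exists>e>0. gball (topspace X) d x e \<subseteq> U" "U \<subseteq> topspace X"
  shows "openin X U"
  unfolding openin_subopen[of X U] using assms openin_gball centre_in_gball by (metis subsetD)

definition infinitesimal_ball :: "'g \<Rightarrow> 'a \<Rightarrow> 'a set" where
  "infinitesimal_ball L x = {y \<in> topspace X. infinitesimal L (d x y)}"

lemma infinitesimal_ball_subset: "infinitesimal_ball L x \<subseteq> topspace X"
  by (auto simp: infinitesimal_ball_def)

lemma infinitesimal_ball_sym:
  "x \<in> topspace X \<Longrightarrow> y \<in> infinitesimal_ball L x \<Longrightarrow> x \<in> infinitesimal_ball L y"
  by (simp add: infinitesimal_ball_def dist_commute)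

lemma infinitesimal_ball_trans:
  assumes "x \<in> topspace X" "y \<in> infinitesimal_ball L x" "z \<in> infinitesimal_ball L y"
  shows "z \<in> infinitesimal_ball L x"
proof -
  have yz: "y \<in> topspace X" "z \<in> topspace X"
    using assms(2,3) by (simp_all add: infinitesimal_ball_def)
  have "infinitesimal L (d x y + d y z)"
    using assms(2,3) by (simp add: infinitesimal_ball_def infinitesimal_add)
  then have "infinitesimal L (d x z)"
    using infinitesimal_le dist_triangle[OF assms(1) yz] by blast
  then show ?thesis
    using yz by (simp add: infinitesimal_ball_def)
qed

lemma infinitesimal_ball_eq:
  assumes "x \<in> topspace X" "y \<in> infinitesimal_ball L x"
  shows "infinitesimal_ball L y = infinitesimal_ball L x"
  using assms infinitesimal_ball_sym infinitesimal_ball_trans infinitesimal_ball_subset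
  by (metis subsetD subsetI subset_antisym)

lemma infinitesimal_ball_diameter:
  assumes "x \<in> topspace X" "y \<in> infinitesimal_ball L x" "z \<in> infinitesimal_ball L x"
  shows "d y z < L"
  using assms infinitesimal_ball_eq infinitesimal_less
  by (fastforce simp: infinitesimal_ball_def)

lemma infinitesimal_ball_mono: "L \<le> L' \<Longrightarrow> infinitesimal_ball L x \<subseteq> infinitesimal_ball L' x"
  by (auto simp: infinitesimal_ball_def intro: infinitesimal_bound_mono)

definition filter_class :: "'a filter \<Rightarrow> 'g \<Rightarrow> 'a set" where
  "filter_class F L = {x \<in> topspace X. eventually (\<lambda>y. y \<in> infinitesimal_ball L x) F}"

lemma filter_class_eq:
  assumes F: "F \<noteq> bot" and x: "x \<in> topspace X"
    and ev: "eventually (\<lambda>y. y \<in> infinitesimal_ball L x) F"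
  shows "filter_class F L = infinitesimal_ball L x"
proof (intro subset_antisym subsetI)
  fix y assume "y \<in> filter_class F L"
  then have y: "y \<in> topspace X" "eventually (\<lambda>z. z \<in> infinitesimal_ball L y) F"
    by (simp_all add: filter_class_def)
  obtain z where "z \<in> infinitesimal_ball L x" "z \<in> infinitesimal_ball L y"
    using eventually_happens'[OF F eventually_conj[OF ev y(2)]] by blast
  then show "y \<in> infinitesimal_ball L x"
    using infinitesimal_ball_sym[OF y(1)] infinitesimal_ball_trans[OF x] by blast
next
  fix y assume y: "y \<in> infinitesimal_ball L x"
  then have "y \<in> topspace X"
    using infinitesimal_ball_subset by blast
  moreover have "infinitesimal_ball L y = infinitesimal_ball L x"
    by (rule infinitesimal_ball_eq[OF x y])
  ultimately show "y \<in> filter_class F L"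
    using ev by (simp add: filter_class_def)
qed

lemma filter_class_subset: "filter_class F L \<subseteq> topspace X"
  by (auto simp: filter_class_def)

lemma filter_class_mono:
  assumes "L \<le> L'"
  shows "filter_class F L \<subseteq> filter_class F L'"
proof
  fix x assume "x \<in> filter_class F L"
  then have "x \<in> topspace X" "eventually (\<lambda>y. y \<in> infinitesimal_ball L x) F"
    by (simp_all add: filter_class_def)
  moreover have "infinitesimal_ball L x \<subseteq> infinitesimal_ball L' x"
    by (rule infinitesimal_ball_mono[OF assms])
  ultimately show "x \<in> filter_class F L'"
    by (auto simp: filter_class_def elim: eventually_mono)
qed

context
  fixes L \<rho> :: 'g
  assumes radius_pos: "0 < \<rho>"
    and radius: "\<And>g. 0 \<le> g \<Longrightarrow> g < \<rho> \<Longrightarrow> infinitesimal L g"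
begin

lemma gball_subset_infinitesimal_ball:
  "x \<in> topspace X \<Longrightarrow> gball (topspace X) d x \<rho> \<subseteq> infinitesimal_ball L x"
  using radius dist_nonneg by (auto simp: gball_def infinitesimal_ball_def)

lemma centre_in_infinitesimal_ball: "x \<in> topspace X \<Longrightarrow> x \<in> infinitesimal_ball L x"
  using gball_subset_infinitesimal_ball centre_in_gball radius_pos by blast

lemma openin_infinitesimal_ball:
  assumes "x \<in> topspace X"
  shows "openin X (infinitesimal_ball L x)"
proof (rule openin_if_gball_subset[OF _ infinitesimal_ball_subset])
  fix y assume y: "y \<in> infinitesimal_ball L x"
  then have "y \<in> topspace X"
    using infinitesimal_ball_subset by blast
  then have "gball (topspace X) d y \<rho> \<subseteq> infinitesimal_ball L y"
    by (rule gball_subset_infinitesimal_ball)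
  then show "\<exists>e>0. gball (topspace X) d y e \<subseteq> infinitesimal_ball L x"
    using radius_pos infinitesimal_ball_eq[OF assms y] by auto
qed

lemma closedin_infinitesimal_ball:
  assumes x: "x \<in> topspace X"
  shows "closedin X (infinitesimal_ball L x)"
proof -
  let ?C = "infinitesimal_ball L x"
  have "topspace X - ?C = (\<Union>y \<in> topspace X - ?C. infinitesimal_ball L y)"
  proof (intro equalityI subsetI)
    fix z assume z: "z \<in> topspace X - ?C"
    then have "z \<in> infinitesimal_ball L z"
      by (simp add: centre_in_infinitesimal_ball)
    with z show "z \<in> (\<Union>y \<in> topspace X - ?C. infinitesimal_ball L y)"
      by (rule UN_I)
  next
    fix z assume "z \<in> (\<Union>y \<in> topspace X - ?C. infinitesimal_ball L y)"
    then obtain y where y: "y \<in> topspace X" "y \<notin> ?C" "z \<in> infinitesimal_ball L y"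
      by blast
    have "z \<notin> ?C"
    proof
      assume "z \<in> ?C"
      then have "infinitesimal_ball L y = ?C"
        using infinitesimal_ball_eq[OF x] infinitesimal_ball_eq[OF y(1,3)] by simp
      then show False
        using y(2) centre_in_infinitesimal_ball[OF y(1)] by simp
    qed
    with y(3) show "z \<in> topspace X - ?C"
      using infinitesimal_ball_subset by blast
  qed
  moreover have "openin X (\<Union>y \<in> topspace X - ?C. infinitesimal_ball L y)"
    by (intro openin_Union) (auto intro: openin_infinitesimal_ball)
  ultimately show ?thesis
    by (simp add: closedin_def infinitesimal_ball_subset)
qed

lemma cauchy_filter_eventually_infinitesimal_ball:
  assumes "cauchy_filter X d F" "F \<noteq> bot"
  obtains x where "x \<in> topspace X" "eventually (\<lambda>y. y \<in> infinitesimal_ball L x) F"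
proof -
  obtain A where A: "eventually (\<lambda>y. y \<in> A) F" "\<forall>x\<in>A. \<forall>y\<in>A. d x y < \<rho>"
    using assms(1) radius_pos unfolding cauchy_filter_def by blast
  have ev: "eventually (\<lambda>y. y \<in> A \<inter> topspace X) F"
    using A(1) assms(1) unfolding cauchy_filter_def by (simp add: eventually_conj)
  then obtain x where x: "x \<in> A" "x \<in> topspace X"
    using eventually_happens'[OF assms(2)] by blast
  have "A \<inter> topspace X \<subseteq> gball (topspace X) d x \<rho>"
    using x(1) A(2) by (auto simp: gball_def)
  also have "\<dots> \<subseteq> infinitesimal_ball L x"
    by (rule gball_subset_infinitesimal_ball[OF x(2)])
  finally have "eventually (\<lambda>y. y \<in> infinitesimal_ball L x) F"
    using ev by (auto elim: eventually_mono)
  then show ?thesis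
    using that x(2) by blast
qed

lemma filter_class_clopen_small:
  assumes F: "cauchy_filter X d F" "F \<noteq> bot"
  shows "eventually (\<lambda>x. x \<in> filter_class F L) F" "openin X (filter_class F L)"
    "closedin X (filter_class F L)" "\<And>x y. x \<in> filter_class F L \<Longrightarrow> y \<in> filter_class F L \<Longrightarrow> d x y < L"
proof -
  obtain x where x: "x \<in> topspace X" "eventually (\<lambda>y. y \<in> infinitesimal_ball L x) F"
    by (rule cauchy_filter_eventually_infinitesimal_ball[OF F])
  have F_class: "filter_class F L = infinitesimal_ball L x"
    by (rule filter_class_eq[OF F(2) x])
  show "eventually (\<lambda>x. x \<in> filter_class F L) F"
    using x(2) by (simp add: F_class)
  show "openin X (filter_class F L)"
    unfolding F_class by (rule openin_infinitesimal_ball[OF x(1)])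
  show "closedin X (filter_class F L)"
    unfolding F_class by (rule closedin_infinitesimal_ball[OF x(1)])
  show "d y z < L" if "y \<in> filter_class F L" "z \<in> filter_class F L" for y z
    using infinitesimal_ball_diameter[OF x(1)] that by (simp add: F_class)
qed

end

end

theorem lemma2p58:
  fixes X :: "'a topology"
    and d0 :: "'a \<Rightarrow> 'a \<Rightarrow> 'h::linordered_ab_group_add" and r0 :: "'m rel"
    and d1 :: "'a \<Rightarrow> 'a \<Rightarrow> 'j::linordered_ab_group_add"
    and r :: "'k rel"
    and d :: "'a \<Rightarrow> 'a \<Rightarrow> 'g::linordered_ab_group_add"
    and F :: "'a filter"
    and l :: "'k option \<Rightarrow> 'g"
  assumes gauge: "Met X d0" "in_G_kappa TYPE('h) r0" "\<not> finite (Field r0)"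
    and reg: "Card_order r" "regularCard r"
    and MG: "Met X d1" "in_G_kappa TYPE('j) r"
    and G: "in_G_kappa TYPE('g) r"
    and d: "Met X d"
    and F: "cauchy_filter X d F"
    and l: "isotone_embedding r l" "g_characteristic r l"
  shows "\<exists>B :: 'k \<Rightarrow> 'a set. \<forall>\<alpha>\<in>Field r.
           eventually (\<lambda>x. x \<in> B \<alpha>) F \<and> B \<alpha> \<subseteq> topspace X \<and>
           openin X (B \<alpha>) \<and> closedin X (B \<alpha>) \<and>
           (\<forall>x\<in>B \<alpha>. \<forall>y\<in>B \<alpha>. d x y \<le> l (Some \<alpha>)) \<and>
           (\<forall>\<beta>\<in>Field r. (\<alpha>, \<beta>) \<in> r \<longrightarrow> B \<beta> \<subseteq> B \<alpha>)"
proof (cases "F = bot")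
  case True
  then show ?thesis by (intro exI[of _ "\<lambda>_. {}"]) simp
next
  case F_proper: False
  interpret G_metric_space X d by (rule G_metric_space.intro[OF d])
  define B where "B \<alpha> = filter_class F (l (Some \<alpha>))" for \<alpha>
  have "eventually (\<lambda>x. x \<in> B \<alpha>) F \<and> B \<alpha> \<subseteq> topspace X \<and>
      openin X (B \<alpha>) \<and> closedin X (B \<alpha>) \<and> (\<forall>x\<in>B \<alpha>. \<forall>y\<in>B \<alpha>. d x y \<le> l (Some \<alpha>))"
    if \<alpha>: "\<alpha> \<in> Field r" for \<alpha>
  proof -
    obtain \<rho> where \<rho>: "0 < \<rho>" "\<And>g. 0 \<le> g \<Longrightarrow> g < \<rho> \<Longrightarrow> infinitesimal (l (Some \<alpha>)) g"
      using in_G_kappa_infinitesimal_radius[OF G l \<alpha>] by metis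
    note props = filter_class_clopen_small[OF \<rho> F F_proper]
    show ?thesis
      unfolding B_def using props(1-3) props(4)[THEN less_imp_le] filter_class_subset by blast
  qed
  moreover have "B \<beta> \<subseteq> B \<alpha>" if "(\<alpha>, \<beta>) \<in> r" for \<alpha> \<beta>
    unfolding B_def by (rule filter_class_mono[OF isotone_embedding_antimono[OF l(1) that]])
  ultimately show ?thesis by blast
qed

end
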